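(* If $\zeta'\le\zeta''$ (coordinatewise) are two configurations in $\{0,1\}^H$, then $\Delta^{\zeta''}\subset\Delta^{\zeta'}$. In particular, if for some $L>0$ and $\delta>0$ the configuration $\zeta'$ is $(L,\delta)$-good on $H$, then $\zeta''$ is also $(L,\delta)$-good on $H$.
   Context: Fix $\lambda>0$, $d\ge2$, $H=\{0,1\}^d\subset\mathbb{Z}^d$; for $x\in H$ let $\mathcal{N}_{H,x}$ be the set of nearest neighbours of $x$ lying in $H$. Each site carries independent Poisson processes of rate $1$ (down marks) and rate $\lambda$ (up marks), independent over sites; $\mathbb{P}$ is the underlying probability, and all processes below are built from the same marks. For $\zeta\in\{0,1\}^H$, the threshold $2$ contact process $(\eta^\zeta_{H;t})_{t\ge0}$ starts from $\zeta$; at a down mark at $x$ the spin becomes $0$; at an up mark at $x$ at time $t$ the spin becomes $1$ if at least $2$ sites of $\mathcal{N}_{H,x}$ are in state $1$ just before $t$. The independent flip process $(\pi^\zeta_{H;t})$ starts from $\zeta$ and sets the spin at $x$ to $0$ at each down mark and to $1$ at each up mark. $\Delta^\zeta=\bigcup_{t\in[0,d^2]}\{x\in H:\eta^\zeta_{H;t}(x)\ne\pi^\zeta_{H;t}(x)\}$. A set $S$ is $L$-thin in $H$ if $|S\cap\mathcal{N}_{H,x}|\le L$ for all $x\in H$; $\zeta$ is $(L,\delta)$-good on $H$ if $\mathbb{P}(\Delta^\zeta\text{ is }L\text{-thin in }H)\ge1-\delta$. *)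

theory Defs
  imports "HOL-Probability.Probability"
begin

type_synonym site = "nat \<Rightarrow> int"
type_synonym config = "site \<Rightarrow> bool"   (* True = spin 1, False = spin 0 *)

text \<open>The hypercube H = {0,1}^d inside Z^d; a point of Z^d is a function nat => int
  vanishing at coordinates >= d.\<close>
definition cube :: "nat \<Rightarrow> site set" where
  "cube d = {x. (\<forall>i<d. x i = 0 \<or> x i = 1) \<and> (\<forall>i\<ge>d. x i = 0)}"

definition nbrs :: "nat \<Rightarrow> site \<Rightarrow> site set" where
  "nbrs d x = {y \<in> cube d. (\<Sum>i<d. \<bar>x i - y i\<bar>) = 1}"

text \<open>Marks: dn x / up x are the sets of times of down / up marks at site x.
  All mark times in (0,t] at sites of H, in increasing order (empty list if infinitely many).\<close>
definition mark_times :: "nat \<Rightarrow> (site \<Rightarrow> real set) \<Rightarrow> (site \<Rightarrow> real set) \<Rightarrow> real \<Rightarrow> real list" where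
  "mark_times d dn up t = sorted_list_of_set {s. 0 \<le> s \<and> s \<le> t \<and> (\<exists>x\<in>cube d. s \<in> dn x \<or> s \<in> up x)}"

definition tc_step :: "nat \<Rightarrow> (site \<Rightarrow> real set) \<Rightarrow> (site \<Rightarrow> real set) \<Rightarrow> real \<Rightarrow> config \<Rightarrow> config" where
  "tc_step d dn up s \<sigma> = (\<lambda>x. if x \<in> cube d \<and> s \<in> dn x then False
      else if x \<in> cube d \<and> s \<in> up x \<and> card {y \<in> nbrs d x. \<sigma> y} \<ge> 2 then True
      else \<sigma> x)"

definition if_step :: "nat \<Rightarrow> (site \<Rightarrow> real set) \<Rightarrow> (site \<Rightarrow> real set) \<Rightarrow> real \<Rightarrow> config \<Rightarrow> config" where
  "if_step d dn up s \<sigma> = (\<lambda>x. if x \<in> cube d \<and> s \<in> dn x then False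
      else if x \<in> cube d \<and> s \<in> up x then True
      else \<sigma> x)"

text \<open>State at time t (right-continuous: marks at times <= t have been applied).\<close>
definition tc_proc :: "nat \<Rightarrow> (site \<Rightarrow> real set) \<Rightarrow> (site \<Rightarrow> real set) \<Rightarrow> config \<Rightarrow> real \<Rightarrow> config" where
  "tc_proc d dn up \<zeta> t = fold (tc_step d dn up) (mark_times d dn up t) \<zeta>"

definition if_proc :: "nat \<Rightarrow> (site \<Rightarrow> real set) \<Rightarrow> (site \<Rightarrow> real set) \<Rightarrow> config \<Rightarrow> real \<Rightarrow> config" where
  "if_proc d dn up \<zeta> t = fold (if_step d dn up) (mark_times d dn up t) \<zeta>"

definition Delta :: "nat \<Rightarrow> (site \<Rightarrow> real set) \<Rightarrow> (site \<Rightarrow> real set) \<Rightarrow> config \<Rightarrow> site set" where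
  "Delta d dn up \<zeta> = (\<Union>t\<in>{0..real (d^2)}. {x \<in> cube d. tc_proc d dn up \<zeta> t x \<noteq> if_proc d dn up \<zeta> t x})"

definition thin :: "nat \<Rightarrow> real \<Rightarrow> site set \<Rightarrow> bool" where
  "thin d L S \<longleftrightarrow> (\<forall>x\<in>cube d. real (card (S \<inter> nbrs d x)) \<le> L)"

text \<open>An independent family (indexed by I) of homogeneous Poisson point processes on (0,oo)
  with rates r i, on the probability space M: N i w is the (locally finite) set of points.\<close>
definition poisson_family :: "'w measure \<Rightarrow> 'i set \<Rightarrow> ('i \<Rightarrow> real) \<Rightarrow> ('i \<Rightarrow> 'w \<Rightarrow> real set) \<Rightarrow> bool" where
  "poisson_family M I r N \<longleftrightarrow> prob_space M \<and> (\<forall>i\<in>I. r i > 0) \<and>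
     (\<forall>i\<in>I. \<forall>w\<in>space M. N i w \<subseteq> {0<..} \<and> (\<forall>b. finite (N i w \<inter> {..b}))) \<and>
     (\<forall>i\<in>I. \<forall>a b. 0 \<le> a \<longrightarrow> a < b \<longrightarrow>
        (\<lambda>w. card (N i w \<inter> {a<..b})) \<in> measurable M (count_space UNIV) \<and>
        distr M (count_space UNIV) (\<lambda>w. card (N i w \<inter> {a<..b})) = measure_pmf (poisson_pmf (r i * (b - a)))) \<and>
     (\<forall>J. J \<subseteq> {(i, a, b). i \<in> I \<and> 0 \<le> a \<and> a < b} \<longrightarrow>
        (\<forall>i a b a' b'. (i, a, b) \<in> J \<longrightarrow> (i, a', b') \<in> J \<longrightarrow> (a, b) \<noteq> (a', b') \<longrightarrow>
            {a<..b} \<inter> {a'<..b'} = {}) \<longrightarrow>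
        prob_space.indep_vars M (\<lambda>_. count_space UNIV) (\<lambda>(i, a, b) w. card (N i w \<inter> {a<..b})) J)"

text \<open>The mark model: N (x, False) = down marks (rate 1), N (x, True) = up marks (rate lam),
  for x in H, all independent.\<close>
definition mark_model :: "nat \<Rightarrow> real \<Rightarrow> 'w measure \<Rightarrow> (site \<times> bool \<Rightarrow> 'w \<Rightarrow> real set) \<Rightarrow> bool" where
  "mark_model d lam M N \<longleftrightarrow>
     poisson_family M (cube d \<times> UNIV) (\<lambda>(x, b). if b then lam else 1) N"

definition good :: "nat \<Rightarrow> 'w measure \<Rightarrow> (site \<times> bool \<Rightarrow> 'w \<Rightarrow> real set) \<Rightarrow> real \<Rightarrow> real \<Rightarrow> config \<Rightarrow> bool" where
  "good d M N L \<delta> \<zeta> \<longleftrightarrow>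
     measure M {w \<in> space M. thin d L (Delta d (\<lambda>x. N (x, False) w) (\<lambda>x. N (x, True) w) \<zeta>)} \<ge> 1 - \<delta>"

end

theory Submission
  imports Defs
begin

text \<open>Run the threshold contact and independent flip processes from \<open>\<zeta>'\<close> and \<open>\<zeta>''\<close> on the
  same marks. Every mark preserves the invariant \<open>coupled\<close>: the contact processes stay ordered
  and below their flip processes, and wherever the two flip processes differ no mark has hit
  the site yet, so both contact processes still agree with them there. Hence a discrepancy for
  \<open>\<zeta>''\<close> forces one for \<open>\<zeta>'\<close> at the same site and time.

  For the probabilistic statement the event that \<open>\<Delta>\<close> is thin has to be measurable. Once the
  dyadic grid of mesh \<open>2^-n\<close> separates the finitely many marks in \<open>[0, d\<^sup>2]\<close>, \<open>\<Delta>\<close> depends only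
  on which sites carry a mark in each grid interval; these finitely-valued labels are measurable
  because the Poisson counts are, and the event is the limit inferior of the grid events.\<close>

lemma cube_finite: "finite (cube d)"
proof -
  have "cube d \<subseteq> (\<lambda>f i. if i < d then f i else 0) ` PiE {..<d} (\<lambda>_. {0, 1})"
  proof
    fix x assume x: "x \<in> cube d"
    have "restrict x {..<d} \<in> PiE {..<d} (\<lambda>_. {0, 1})" and "x = (\<lambda>i. if i < d then restrict x {..<d} i else 0)"
      using x by (auto simp: cube_def)
    then show "x \<in> (\<lambda>f i. if i < d then f i else 0) ` PiE {..<d} (\<lambda>_. {0, 1})" by blast
  qed
  then show ?thesis by (rule finite_subset) (intro finite_imageI finite_PiE; simp)
qed

lemma nbrs_finite: "finite (nbrs d x)"
  using cube_finite by (rule finite_subset[rotated]) (auto simp: nbrs_def)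

section \<open>Coupling\<close>

definition coupled :: "nat \<Rightarrow> config \<Rightarrow> config \<Rightarrow> config \<Rightarrow> config \<Rightarrow> bool" where
  "coupled d \<sigma>' \<sigma>'' \<pi>' \<pi>'' \<longleftrightarrow> (\<forall>x\<in>cube d. (\<sigma>' x \<longrightarrow> \<sigma>'' x) \<and> (\<sigma>' x \<longrightarrow> \<pi>' x) \<and> (\<sigma>'' x \<longrightarrow> \<pi>'' x)
      \<and> (\<pi>' x = \<pi>'' x \<or> (\<sigma>' x = \<pi>' x \<and> \<sigma>'' x = \<pi>'' x)))"

lemma coupled_step:
  assumes "coupled d \<sigma>' \<sigma>'' \<pi>' \<pi>''"
  shows "coupled d (tc_step d dn up s \<sigma>') (tc_step d dn up s \<sigma>'') (if_step d dn up s \<pi>') (if_step d dn up s \<pi>'')"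
proof -
  have "card {y \<in> nbrs d x. \<sigma>' y} \<le> card {y \<in> nbrs d x. \<sigma>'' y}" for x
  proof (rule card_mono)
    show "finite {y \<in> nbrs d x. \<sigma>'' y}" using nbrs_finite[of d x] by simp
    show "{y \<in> nbrs d x. \<sigma>' y} \<subseteq> {y \<in> nbrs d x. \<sigma>'' y}"
      using assms by (auto simp: coupled_def nbrs_def)
  qed
  with assms show ?thesis
    unfolding coupled_def tc_step_def if_step_def by (smt (verit, best) le_trans)
qed

lemma coupled_fold:
  "coupled d \<sigma>' \<sigma>'' \<pi>' \<pi>'' \<Longrightarrow>
    coupled d (fold (tc_step d dn up) ts \<sigma>') (fold (tc_step d dn up) ts \<sigma>'')
      (fold (if_step d dn up) ts \<pi>') (fold (if_step d dn up) ts \<pi>'')"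
  by (induction ts arbitrary: \<sigma>' \<sigma>'' \<pi>' \<pi>'') (simp_all add: coupled_step)

lemma Delta_antimono:
  assumes le: "\<forall>x\<in>cube d. \<zeta>' x \<longrightarrow> \<zeta>'' x"
  shows "Delta d dn up \<zeta>'' \<subseteq> Delta d dn up \<zeta>'"
proof
  fix x assume "x \<in> Delta d dn up \<zeta>''"
  then obtain t where t: "t \<in> {0..real (d^2)}" "x \<in> cube d"
    "tc_proc d dn up \<zeta>'' t x \<noteq> if_proc d dn up \<zeta>'' t x" unfolding Delta_def by blast
  have "coupled d \<zeta>' \<zeta>'' \<zeta>' \<zeta>''" using le by (auto simp: coupled_def)
  then have "coupled d (tc_proc d dn up \<zeta>' t) (tc_proc d dn up \<zeta>'' t) (if_proc d dn up \<zeta>' t) (if_proc d dn up \<zeta>'' t)"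
    unfolding tc_proc_def if_proc_def by (rule coupled_fold)
  with t have "tc_proc d dn up \<zeta>' t x \<noteq> if_proc d dn up \<zeta>' t x" unfolding coupled_def by blast
  with t show "x \<in> Delta d dn up \<zeta>'" by (auto simp: Delta_def)
qed

lemma thin_antimono: "S \<subseteq> S' \<Longrightarrow> thin d L S' \<Longrightarrow> thin d L S"
  unfolding thin_def
  by (smt (verit, best) card_mono finite_Int inf_mono nbrs_finite of_nat_le_iff order_refl)

section \<open>Dyadic discretisation\<close>

definition marks :: "nat \<Rightarrow> (site \<Rightarrow> real set) \<Rightarrow> (site \<Rightarrow> real set) \<Rightarrow> real \<Rightarrow> real set" where
  "marks d dn up t = {s. 0 \<le> s \<and> s \<le> t \<and> (\<exists>x\<in>cube d. s \<in> dn x \<or> s \<in> up x)}"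

lemma mark_times_eq: "mark_times d dn up t = sorted_list_of_set (marks d dn up t)"
  by (simp add: mark_times_def marks_def)

lemma marks_mono: "t \<le> t' \<Longrightarrow> marks d dn up t \<subseteq> marks d dn up t'"
  by (auto simp: marks_def)

lemma marks_split: "a \<le> b \<Longrightarrow> marks d dn up b = marks d dn up a \<union> (marks d dn up b \<inter> {a<..b})"
  by (auto simp: marks_def)

lemma marks_in_interval:
  "0 \<le> a \<Longrightarrow> x \<in> cube d \<Longrightarrow> (dn x \<union> up x) \<inter> {a<..b} \<subseteq> marks d dn up b \<inter> {a<..b}"
  by (auto simp: marks_def)

definition separated :: "real \<Rightarrow> real set \<Rightarrow> bool" where
  "separated h S \<longleftrightarrow> (\<forall>s\<in>S. \<forall>s'\<in>S. s \<noteq> s' \<longrightarrow> h \<le> \<bar>s - s'\<bar>)"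

lemma separated_subset: "separated h S \<Longrightarrow> S' \<subseteq> S \<Longrightarrow> separated h S'"
  by (auto simp: separated_def)

lemma separated_antimono: "separated h S \<Longrightarrow> h' \<le> h \<Longrightarrow> separated h' S"
  by (force simp: separated_def)

lemma finite_separated_dyadic:
  assumes "finite S"
  shows "\<exists>n. separated (1 / 2^n) S"
proof -
  define D where "D = (\<lambda>(s, s'). \<bar>s - s'\<bar>) ` {p \<in> S \<times> S. fst p \<noteq> snd p}"
  have "finite D" using assms by (simp add: D_def)
  obtain m where m: "m > 0" "\<forall>r\<in>D. m \<le> r"
  proof (cases "D = {}")
    case False
    with \<open>finite D\<close> show ?thesis by (intro that[of "Min D"]) (auto simp: D_def)
  qed (auto intro: that[of 1])
  obtain n where "(1/2::real)^n < m" using real_arch_pow_inv[OF m(1), of "1/2"] by auto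
  then have "1 / 2^n \<le> \<bar>s - s'\<bar>" if "s \<in> S" "s' \<in> S" "s \<noteq> s'" for s s'
    using m(2) that by (fastforce simp: D_def power_one_over)
  then show ?thesis unfolding separated_def by blast
qed

lemma separated_interval_unique:
  assumes "separated (b - a) S" "s \<in> S \<inter> {a<..b}" "s' \<in> S \<inter> {a<..b}"
  shows "s = s'"
  using assms by (force simp: separated_def)

text \<open>A label is the pair (sites with a down mark, sites with an up mark); both update rules see
  a mark time only through its label.\<close>

type_synonym label = "site set \<times> site set"

definition tc_update :: "nat \<Rightarrow> label \<Rightarrow> config \<Rightarrow> config" where
  "tc_update d l \<sigma> = (\<lambda>x. if x \<in> cube d \<and> x \<in> fst l then False
      else if x \<in> cube d \<and> x \<in> snd l \<and> card {y \<in> nbrs d x. \<sigma> y} \<ge> 2 then True else \<sigma> x)"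

definition if_update :: "nat \<Rightarrow> label \<Rightarrow> config \<Rightarrow> config" where
  "if_update d l \<sigma> = (\<lambda>x. if x \<in> cube d \<and> x \<in> fst l then False
      else if x \<in> cube d \<and> x \<in> snd l then True else \<sigma> x)"

definition mark_label :: "nat \<Rightarrow> (site \<Rightarrow> real set) \<Rightarrow> (site \<Rightarrow> real set) \<Rightarrow> real \<Rightarrow> label" where
  "mark_label d dn up s = ({x \<in> cube d. s \<in> dn x}, {x \<in> cube d. s \<in> up x})"

definition interval_label :: "nat \<Rightarrow> (site \<Rightarrow> real set) \<Rightarrow> (site \<Rightarrow> real set) \<Rightarrow> real \<Rightarrow> real \<Rightarrow> label" where
  "interval_label d dn up a b =
     ({x \<in> cube d. dn x \<inter> {a<..b} \<noteq> {}}, {x \<in> cube d. up x \<inter> {a<..b} \<noteq> {}})"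

lemma tc_step_eq: "tc_step d dn up = (\<lambda>s. tc_update d (mark_label d dn up s))"
  by (auto simp: fun_eq_iff tc_step_def tc_update_def mark_label_def)

lemma if_step_eq: "if_step d dn up = (\<lambda>s. if_update d (mark_label d dn up s))"
  by (auto simp: fun_eq_iff if_step_def if_update_def mark_label_def)

lemma tc_update_empty: "tc_update d ({}, {}) = id"
  by (auto simp: fun_eq_iff tc_update_def)

lemma if_update_empty: "if_update d ({}, {}) = id"
  by (auto simp: fun_eq_iff if_update_def)

lemma sorted_list_of_set_insert_greatest:
  fixes A :: "'a::linorder set"
  assumes "finite A" "\<forall>y\<in>A. y < s"
  shows "sorted_list_of_set (insert s A) = sorted_list_of_set A @ [s]"
  using assms by (intro sorted_list_of_set_unique[THEN iffD1])
    (auto simp: sorted_wrt_append card_insert_if)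

lemma fold_mark_times_interval:
  fixes G :: "label \<Rightarrow> config \<Rightarrow> config"
  assumes G0: "G ({}, {}) = id" and ab: "0 \<le> a" "a \<le> b"
    and fin: "finite (marks d dn up b)" and sep: "separated (b - a) (marks d dn up b)"
  shows "fold (\<lambda>s. G (mark_label d dn up s)) (mark_times d dn up b) \<zeta>
       = G (interval_label d dn up a b) (fold (\<lambda>s. G (mark_label d dn up s)) (mark_times d dn up a) \<zeta>)"
proof (cases "marks d dn up b \<inter> {a<..b} = {}")
  case True
  then have "interval_label d dn up a b = ({}, {})"
    using marks_in_interval[OF ab(1)] by (fastforce simp: interval_label_def)
  moreover have "marks d dn up b = marks d dn up a"
    using True marks_split[OF ab(2), of d dn up] by blast
  ultimately show ?thesis by (simp add: mark_times_eq G0)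
next
  case False
  then obtain s where s: "s \<in> marks d dn up b \<inter> {a<..b}" by blast
  with sep have single: "marks d dn up b \<inter> {a<..b} = {s}"
    using separated_interval_unique by blast
  have "interval_label d dn up a b = mark_label d dn up s"
  proof -
    have "(dn x \<inter> {a<..b} \<noteq> {} \<longleftrightarrow> s \<in> dn x) \<and> (up x \<inter> {a<..b} \<noteq> {} \<longleftrightarrow> s \<in> up x)"
      if "x \<in> cube d" for x
    proof -
      have "(dn x \<union> up x) \<inter> {a<..b} \<subseteq> {s}"
        using marks_in_interval[OF ab(1) that, where b=b and dn=dn and up=up] single by blast
      then show ?thesis using s by auto
    qed
    then show ?thesis by (auto simp: interval_label_def mark_label_def)
  qed
  moreover have "marks d dn up b = insert s (marks d dn up a)"
    using marks_split[OF ab(2), of d dn up] single by blast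
  moreover have "finite (marks d dn up a)" "\<forall>y\<in>marks d dn up a. y < s"
    using finite_subset[OF marks_mono[OF ab(2)] fin] s by (auto simp: marks_def)
  ultimately show ?thesis
    by (simp only: mark_times_eq sorted_list_of_set_insert_greatest) simp
qed

definition grid_labels :: "nat \<Rightarrow> (site \<Rightarrow> real set) \<Rightarrow> (site \<Rightarrow> real set) \<Rightarrow> nat \<Rightarrow> nat \<Rightarrow> label list" where
  "grid_labels d dn up T n =
     map (\<lambda>k. interval_label d dn up (real k / 2^n) (real (Suc k) / 2^n)) [0..<T * 2^n]"

lemma dyadic_le_iff: "real k / 2^n \<le> real T \<longleftrightarrow> k \<le> T * 2^n"
proof -
  have "real k / 2^n \<le> real T \<longleftrightarrow> real k \<le> real (T * 2^n)" by (simp add: divide_le_eq)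
  then show ?thesis by (simp only: of_nat_le_iff)
qed

lemma dyadic_step: "real (Suc k) / 2^n - real k / 2^n = 1 / 2^n"
  by (simp add: field_simps)

lemma fold_grid_labels:
  fixes G :: "label \<Rightarrow> config \<Rightarrow> config"
  assumes G0: "G ({}, {}) = id" and pos: "\<forall>x\<in>cube d. dn x \<union> up x \<subseteq> {0<..}"
    and fin: "finite (marks d dn up (real T))" and sep: "separated (1 / 2^n) (marks d dn up (real T))"
  shows "k \<le> T * 2^n \<Longrightarrow> fold G (take k (grid_labels d dn up T n)) \<zeta>
     = fold (\<lambda>s. G (mark_label d dn up s)) (mark_times d dn up (real k / 2^n)) \<zeta>"
proof (induction k)
  case 0
  have "marks d dn up 0 = {}" using pos by (force simp: marks_def)
  then show ?case by (simp add: mark_times_eq)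
next
  case (Suc k)
  define a where "a = real k / 2^n"
  define b where "b = real (Suc k) / 2^n"
  have "a \<le> b" by (simp add: a_def b_def divide_right_mono)
  have "b - a = 1 / 2^n" unfolding a_def b_def by (rule dyadic_step)
  have "b \<le> real T" unfolding b_def dyadic_le_iff using Suc.prems .
  then have sub: "marks d dn up b \<subseteq> marks d dn up (real T)" by (rule marks_mono)
  have "0 \<le> a" by (simp add: a_def)
  have sep_ab: "separated (b - a) (marks d dn up b)"
    using separated_subset[OF sep sub] \<open>b - a = 1 / 2^n\<close> by simp
  have "fold G (take (Suc k) (grid_labels d dn up T n)) \<zeta>
      = G (interval_label d dn up a b) (fold G (take k (grid_labels d dn up T n)) \<zeta>)"
    using Suc.prems by (simp add: grid_labels_def take_Suc_conv_app_nth a_def b_def)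
  also have "\<dots> = fold (\<lambda>s. G (mark_label d dn up s)) (mark_times d dn up b) \<zeta>"
    using fold_mark_times_interval[where G=G, OF G0 \<open>0 \<le> a\<close> \<open>a \<le> b\<close> finite_subset[OF sub fin] sep_ab]
      Suc by (simp add: a_def)
  finally show ?case by (simp add: b_def)
qed

text \<open>Take the grid point \<open>a\<close> just below \<open>t\<close>. If a mark lies in \<open>(a, t]\<close>, separation makes it
  the only mark up to the next grid point \<open>b\<close>, and \<open>b\<close> can be used instead.\<close>

lemma marks_eq_marks_dyadic:
  assumes sep: "separated (1 / 2^n) (marks d dn up (real T))" and t: "0 \<le> t" "t \<le> real T"
  shows "\<exists>k\<le>T * 2^n. marks d dn up t = marks d dn up (real k / 2^n)"
proof -
  define k where "k = nat \<lfloor>t * 2^n\<rfloor>"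
  define a where "a = real k / 2^n"
  define b where "b = real (Suc k) / 2^n"
  have k: "real k \<le> t * 2^n" "t * 2^n < real k + 1"
    using t(1) by (simp_all add: k_def)
  then have "a \<le> t" "t < b" by (simp_all add: a_def b_def field_simps)
  have "a \<le> real T" using \<open>a \<le> t\<close> t(2) by linarith
  then have "k \<le> T * 2^n" unfolding a_def dyadic_le_iff .
  show ?thesis
  proof (cases "marks d dn up t \<inter> {a<..t} = {}")
    case True
    then have "marks d dn up t = marks d dn up a" using marks_split[OF \<open>a \<le> t\<close>] by blast
    with \<open>k \<le> T * 2^n\<close> show ?thesis by (auto simp: a_def)
  next
    case False
    then obtain s where s: "s \<in> marks d dn up t" "a < s" "s \<le> t" by auto
    have "t < real T"
    proof (rule ccontr)
      assume "\<not> t < real T"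
      then have "t * 2^n = real (T * 2^n)" using t(2) by simp
      then have "a = t" by (simp add: a_def k_def)
      with s show False by simp
    qed
    have "t * 2^n < real T * 2^n" using \<open>t < real T\<close> by simp
    then have "real k < real (T * 2^n)" using k(1) by (simp only: of_nat_mult of_nat_power of_nat_numeral)
    then have "Suc k \<le> T * 2^n" by (simp only: of_nat_less_iff Suc_le_eq)
    then have "b \<le> real T" unfolding b_def dyadic_le_iff .
    have sub: "marks d dn up b \<subseteq> marks d dn up (real T)" using \<open>b \<le> real T\<close> by (rule marks_mono)
    have "b - a = 1 / 2^n" unfolding a_def b_def by (rule dyadic_step)
    then have sep_b: "separated (b - a) (marks d dn up b)" using separated_subset[OF sep sub] by simp
    have "s \<in> marks d dn up b \<inter> {a<..b}" using s marks_mono[of t b d dn up] \<open>t < b\<close> by auto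
    then have "marks d dn up b \<inter> {a<..b} = {s}" using separated_interval_unique[OF sep_b] by blast
    then have "marks d dn up b = insert s (marks d dn up a)"
      using marks_split[of a b d dn up] \<open>a \<le> t\<close> \<open>t < b\<close> by simp
    then have "marks d dn up t = marks d dn up b"
      using marks_mono[of a t d dn up] marks_mono[of t b d dn up] \<open>a \<le> t\<close> \<open>t < b\<close> s(1) by auto
    with \<open>Suc k \<le> T * 2^n\<close> show ?thesis by (auto simp: b_def)
  qed
qed

definition Delta_labels :: "nat \<Rightarrow> config \<Rightarrow> label list \<Rightarrow> site set" where
  "Delta_labels d \<zeta> ls = (\<Union>k\<le>length ls.
     {x \<in> cube d. fold (tc_update d) (take k ls) \<zeta> x \<noteq> fold (if_update d) (take k ls) \<zeta> x})"

lemma Delta_eq_Delta_labels: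
  assumes pos: "\<forall>x\<in>cube d. dn x \<union> up x \<subseteq> {0<..}"
    and fin: "finite (marks d dn up (real (d^2)))" and sep: "separated (1 / 2^n) (marks d dn up (real (d^2)))"
  shows "Delta d dn up \<zeta> = Delta_labels d \<zeta> (grid_labels d dn up (d^2) n)"
proof -
  define disc where "disc t = {x \<in> cube d. tc_proc d dn up \<zeta> t x \<noteq> if_proc d dn up \<zeta> t x}" for t
  have disc_marks: "disc t = disc t'" if "marks d dn up t = marks d dn up t'" for t t'
    using that by (simp add: disc_def tc_proc_def if_proc_def mark_times_eq)
  have "{x \<in> cube d. fold (tc_update d) (take k (grid_labels d dn up (d^2) n)) \<zeta> x
        \<noteq> fold (if_update d) (take k (grid_labels d dn up (d^2) n)) \<zeta> x} = disc (real k / 2^n)"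
    if "k \<le> d^2 * 2^n" for k
    using fold_grid_labels[where G = "tc_update d", OF tc_update_empty pos fin sep that]
      fold_grid_labels[where G = "if_update d", OF if_update_empty pos fin sep that]
    by (simp add: disc_def tc_proc_def if_proc_def tc_step_eq if_step_eq)
  then have "Delta_labels d \<zeta> (grid_labels d dn up (d^2) n) = (\<Union>k\<le>d^2 * 2^n. disc (real k / 2^n))"
    by (simp add: Delta_labels_def grid_labels_def)
  also have "\<dots> = (\<Union>t\<in>{0..real (d^2)}. disc t)"
  proof (intro antisym UN_least)
    fix k assume "k \<in> {..d^2 * 2^n}"
    then have "real k / 2^n \<le> real (d^2)" by (simp only: atMost_iff dyadic_le_iff)
    then have "real k / 2^n \<in> {0..real (d^2)}" by simp
    then show "disc (real k / 2^n) \<subseteq> (\<Union>t\<in>{0..real (d^2)}. disc t)" by blast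
  next
    fix t assume "t \<in> {0..real (d^2)}"
    then obtain k where "k \<le> d^2 * 2^n" "marks d dn up t = marks d dn up (real k / 2^n)"
      using marks_eq_marks_dyadic[OF sep] by auto
    then show "disc t \<subseteq> (\<Union>k\<le>d^2 * 2^n. disc (real k / 2^n))" using disc_marks by blast
  qed
  finally show ?thesis by (simp add: Delta_def disc_def)
qed

lemma Delta_eventually_Delta_labels:
  assumes pos: "\<forall>x\<in>cube d. dn x \<union> up x \<subseteq> {0<..}"
    and fin: "\<forall>x\<in>cube d. finite (dn x \<inter> {..real (d^2)}) \<and> finite (up x \<inter> {..real (d^2)})"
  shows "\<exists>n0. \<forall>n\<ge>n0. Delta d dn up \<zeta> = Delta_labels d \<zeta> (grid_labels d dn up (d^2) n)"
proof -
  have "marks d dn up (real (d^2)) \<subseteq> (\<Union>x\<in>cube d. dn x \<inter> {..real (d^2)} \<union> up x \<inter> {..real (d^2)})"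
    by (auto simp: marks_def)
  then have fin_marks: "finite (marks d dn up (real (d^2)))"
    by (rule finite_subset) (use fin cube_finite in auto)
  then obtain n0 where "separated (1 / 2^n0) (marks d dn up (real (d^2)))"
    using finite_separated_dyadic by blast
  moreover have "(1::real) / 2^n \<le> 1 / 2^n0" if "n0 \<le> n" for n
    using that by (intro divide_left_mono power_increasing) auto
  ultimately have "separated (1 / 2^n) (marks d dn up (real (d^2)))" if "n0 \<le> n" for n
    using that separated_antimono by blast
  then show ?thesis using Delta_eq_Delta_labels[OF pos fin_marks] by blast
qed

section \<open>Measurability\<close>

lemma mark_model_prob_space: "mark_model d lam M N \<Longrightarrow> prob_space M"
  by (simp add: mark_model_def poisson_family_def)

lemma mark_model_positive:
  "mark_model d lam M N \<Longrightarrow> x \<in> cube d \<Longrightarrow> w \<in> space M \<Longrightarrow> N (x, b) w \<subseteq> {0<..}"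
  unfolding mark_model_def poisson_family_def by blast

lemma mark_model_locally_finite:
  "mark_model d lam M N \<Longrightarrow> x \<in> cube d \<Longrightarrow> w \<in> space M \<Longrightarrow> finite (N (x, b) w \<inter> {..c})"
  unfolding mark_model_def poisson_family_def by blast

lemma mark_model_count_measurable:
  assumes "mark_model d lam M N" "x \<in> cube d" "0 \<le> a" "a < c"
  shows "(\<lambda>w. card (N (x, b) w \<inter> {a<..c})) \<in> measurable M (count_space UNIV)"
proof -
  have "(x, b) \<in> cube d \<times> UNIV" using assms(2) by simp
  with assms show ?thesis unfolding mark_model_def poisson_family_def by blast
qed

lemma pred_marks_in_interval:
  assumes mm: "mark_model d lam M N" and x: "x \<in> cube d" and ac: "0 \<le> a" "a < c"
  shows "Measurable.pred M (\<lambda>w. N (x, b) w \<inter> {a<..c} \<noteq> {})"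
proof -
  have "Measurable.pred M (\<lambda>w. card (N (x, b) w \<inter> {a<..c}) \<noteq> 0)"
    using mark_model_count_measurable[OF mm x ac] by measurable
  moreover have "finite (N (x, b) w \<inter> {a<..c})" if "w \<in> space M" for w
    using mark_model_locally_finite[OF mm x that, of b c] by (rule finite_subset[rotated]) auto
  then have "Measurable.pred M (\<lambda>w. card (N (x, b) w \<inter> {a<..c}) \<noteq> 0)
      \<longleftrightarrow> Measurable.pred M (\<lambda>w. N (x, b) w \<inter> {a<..c} \<noteq> {})"
    by (intro measurable_cong) simp
  ultimately show ?thesis by blast
qed

lemma pred_interval_label_eq:
  assumes mm: "mark_model d lam M N" and ac: "0 \<le> a" "a < c"
  shows "Measurable.pred M (\<lambda>w. interval_label d (\<lambda>x. N (x, False) w) (\<lambda>x. N (x, True) w) a c = l)"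
proof -
  have "interval_label d (\<lambda>x. N (x, False) w) (\<lambda>x. N (x, True) w) a c = l \<longleftrightarrow>
      fst l \<subseteq> cube d \<and> snd l \<subseteq> cube d \<and>
      (\<forall>x\<in>cube d. (N (x, False) w \<inter> {a<..c} \<noteq> {} \<longleftrightarrow> x \<in> fst l)
                \<and> (N (x, True) w \<inter> {a<..c} \<noteq> {} \<longleftrightarrow> x \<in> snd l))" for w
    by (cases l) (auto simp: interval_label_def)
  then show ?thesis
    by (simp only:) (intro pred_intros_logic pred_intros_finite(3) cube_finite measurable_const
        pred_marks_in_interval[OF mm _ ac]; simp)
qed

definition grid_label_lists :: "nat \<Rightarrow> nat \<Rightarrow> nat \<Rightarrow> label list set" where
  "grid_label_lists d T n = {ls. set ls \<subseteq> Pow (cube d) \<times> Pow (cube d) \<and> length ls = T * 2^n}"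

lemma finite_grid_label_lists: "finite (grid_label_lists d T n)"
  unfolding grid_label_lists_def by (rule finite_lists_length_eq) (simp add: cube_finite)

lemma grid_labels_in_grid_label_lists: "grid_labels d dn up T n \<in> grid_label_lists d T n"
  by (auto simp: grid_label_lists_def grid_labels_def interval_label_def)

lemma pred_grid_labels_eq:
  assumes mm: "mark_model d lam M N"
  shows "Measurable.pred M (\<lambda>w. grid_labels d (\<lambda>x. N (x, False) w) (\<lambda>x. N (x, True) w) T n = ls)"
proof -
  have "grid_labels d (\<lambda>x. N (x, False) w) (\<lambda>x. N (x, True) w) T n = ls \<longleftrightarrow>
      length ls = T * 2^n \<and> (\<forall>k\<in>{..<T * 2^n}.
        interval_label d (\<lambda>x. N (x, False) w) (\<lambda>x. N (x, True) w) (real k / 2^n) (real (Suc k) / 2^n) = ls ! k)"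
    for w by (auto simp: grid_labels_def list_eq_iff_nth_eq)
  moreover have "0 \<le> real k / 2^n" "real k / 2^n < real (Suc k) / 2^n" for k
    by (simp_all add: divide_strict_right_mono)
  ultimately show ?thesis
    by (simp only:) (intro pred_intros_logic pred_intros_finite(3) finite_lessThan measurable_const
        pred_interval_label_eq[OF mm]; simp)
qed

lemma pred_thin_Delta_labels:
  assumes mm: "mark_model d lam M N"
  shows "Measurable.pred M (\<lambda>w. thin d L (Delta_labels d \<zeta> (grid_labels d (\<lambda>x. N (x, False) w) (\<lambda>x. N (x, True) w) T n)))"
proof -
  have "thin d L (Delta_labels d \<zeta> (grid_labels d (\<lambda>x. N (x, False) w) (\<lambda>x. N (x, True) w) T n)) \<longleftrightarrow>
      (\<exists>ls\<in>grid_label_lists d T n. thin d L (Delta_labels d \<zeta> ls)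
         \<and> grid_labels d (\<lambda>x. N (x, False) w) (\<lambda>x. N (x, True) w) T n = ls)" for w
    using grid_labels_in_grid_label_lists by auto
  then show ?thesis
    by (simp only:) (intro pred_intros_finite(4) finite_grid_label_lists pred_intros_logic
        measurable_const pred_grid_labels_eq[OF mm]; simp)
qed

lemma eventually_const_iff:
  fixes f :: "nat \<Rightarrow> 'a"
  assumes "\<forall>n\<ge>n1. c = f n"
  shows "P c \<longleftrightarrow> (\<exists>n0. \<forall>n\<ge>n0. P (f n))"
proof
  assume "P c"
  with assms show "\<exists>n0. \<forall>n\<ge>n0. P (f n)" by auto
next
  assume "\<exists>n0. \<forall>n\<ge>n0. P (f n)"
  then obtain n0 where "\<forall>n\<ge>n0. P (f n)" by blast
  then have "P (f (max n0 n1))" by simp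
  moreover have "c = f (max n0 n1)" using assms by simp
  ultimately show "P c" by simp
qed

lemma sets_thin_Delta:
  assumes mm: "mark_model d lam M N"
  shows "{w \<in> space M. thin d L (Delta d (\<lambda>x. N (x, False) w) (\<lambda>x. N (x, True) w) \<zeta>)} \<in> sets M"
proof -
  define eventually_thin where "eventually_thin w \<longleftrightarrow> (\<exists>n0. \<forall>n\<ge>n0.
      thin d L (Delta_labels d \<zeta> (grid_labels d (\<lambda>x. N (x, False) w) (\<lambda>x. N (x, True) w) (d^2) n)))" for w
  have "thin d L (Delta d (\<lambda>x. N (x, False) w) (\<lambda>x. N (x, True) w) \<zeta>) \<longleftrightarrow> eventually_thin w"
    if w: "w \<in> space M" for w
  proof -
    have pos: "\<forall>x\<in>cube d. N (x, False) w \<union> N (x, True) w \<subseteq> {0<..}"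
      using mark_model_positive[OF mm _ w] by blast
    have fin: "\<forall>x\<in>cube d. finite (N (x, False) w \<inter> {..real (d^2)}) \<and> finite (N (x, True) w \<inter> {..real (d^2)})"
      using mark_model_locally_finite[OF mm _ w] by blast
    obtain n1 where "\<forall>n\<ge>n1. Delta d (\<lambda>x. N (x, False) w) (\<lambda>x. N (x, True) w) \<zeta>
        = Delta_labels d \<zeta> (grid_labels d (\<lambda>x. N (x, False) w) (\<lambda>x. N (x, True) w) (d^2) n)"
      using Delta_eventually_Delta_labels[OF pos fin] by blast
    then show ?thesis unfolding eventually_thin_def by (rule eventually_const_iff[where P = "thin d L"])
  qed
  then have "{w \<in> space M. thin d L (Delta d (\<lambda>x. N (x, False) w) (\<lambda>x. N (x, True) w) \<zeta>)}
      = {w \<in> space M. eventually_thin w}" by blast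
  moreover have "Measurable.pred M eventually_thin"
    unfolding eventually_thin_def
    by (intro pred_intros_countable(2) pred_intros_countable(1) pred_intros_imp'
        pred_thin_Delta_labels[OF mm])
  ultimately show ?thesis by (simp add: pred_def)
qed

theorem lemma4p2:
  fixes d :: nat and lam :: real and \<zeta>' \<zeta>'' :: config
  assumes "d \<ge> 2" and "lam > 0"
    and le: "\<forall>x\<in>cube d. \<zeta>' x \<longrightarrow> \<zeta>'' x"
  shows "(\<forall>dn up. Delta d dn up \<zeta>'' \<subseteq> Delta d dn up \<zeta>')
    \<and> (\<forall>(M :: 'w measure) N L \<delta>.
          mark_model d lam M N \<longrightarrow> L > 0 \<longrightarrow> \<delta> > 0 \<longrightarrow>
          good d M N L \<delta> \<zeta>' \<longrightarrow> good d M N L \<delta> \<zeta>'')"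
proof (intro conjI allI impI)
  fix dn up show "Delta d dn up \<zeta>'' \<subseteq> Delta d dn up \<zeta>'" using Delta_antimono[OF le] .
next
  fix M :: "'w measure" and N L \<delta>
  assume mm: "mark_model d lam M N" and good': "good d M N L \<delta> \<zeta>'"
  interpret prob_space M using mark_model_prob_space[OF mm] .
  have "{w \<in> space M. thin d L (Delta d (\<lambda>x. N (x, False) w) (\<lambda>x. N (x, True) w) \<zeta>')}
     \<subseteq> {w \<in> space M. thin d L (Delta d (\<lambda>x. N (x, False) w) (\<lambda>x. N (x, True) w) \<zeta>'')}"
    using thin_antimono[OF Delta_antimono[OF le]] by blast
  then have "measure M {w \<in> space M. thin d L (Delta d (\<lambda>x. N (x, False) w) (\<lambda>x. N (x, True) w) \<zeta>')}
     \<le> measure M {w \<in> space M. thin d L (Delta d (\<lambda>x. N (x, False) w) (\<lambda>x. N (x, True) w) \<zeta>'')}"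
    \<comment> \<open>\<open>measure\<close> is 0 on non-measurable sets, so this needs the larger event to be measurable\<close>
    by (rule finite_measure_mono[OF _ sets_thin_Delta[OF mm]])
  with good' show "good d M N L \<delta> \<zeta>''" unfolding good_def by linarith
qed

end
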